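(* (Global context translation.) Let $\Delta$ be the global context collected from a FOOD program $P$, and $\Delta'$ the global context collected from $P'$, where $\Delta;\Gamma\vdash P\Rightarrow T\leadsto P'$. Then $\textsc{It}=\textsc{Dt}'$ and $\textsc{Dt}=\textsc{It}'$; for all $D\in\textsc{It}$, $\textsc{Dtr}(D)=\textsc{Csm}'(D)$ and $\textsc{Gen}(D)=\textsc{Ctr}'(D)$; and for all $D\in\textsc{Dt}$, $\textsc{Csm}(D)=\textsc{Dtr}'(D)$ and $\textsc{Ctr}(D)=\textsc{Gen}'(D)$. (This situation is written $\Delta\leadsto\Delta'$.)
   Context: FOOD programs consist of definitions followed by an expression. Definitions: datatypes $\texttt{data}\ D$; interfaces $\texttt{interface}\ D\{\overline{Dtr}\}$ with destructors (declarations $\texttt{def}\ f(\overline{x:T}):T$ or functions with a default body); constructors $\texttt{case}\ C(\overline{x:T})\ \texttt{extends}\ D$; generators $\texttt{class}\ C(\overline{x:T})\ \texttt{implements}\ D\{\overline{Fun}\}$; consumers $\texttt{def}\ f(\texttt{self}:D)(\overline{x:T}):T=\overline{\texttt{case}\ P\Rightarrow e}$. Global context (primes denote the context of $P'$): $\textsc{Dt}$ datatype names, $\textsc{It}$ interface names (only types selected for transformation are kept in these sets; unselected types have their associated sets emptied), $\textsc{Ctr}(D)$, $\textsc{Gen}(D)$, $\textsc{Dtr}(D)$, $\textsc{Csm}(D)$ the constructors, generators, destructors and consumers (first parameter of type $D$) of $D$. The translation $\Delta;\Gamma\vdash P\Rightarrow T\leadsto P'$: (It2Dt) each $\texttt{interface}\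 D\{\overline{Dtr}\}$ with $D\in\textsc{It}$ becomes $\texttt{data}\ D$ followed by one consumer $\texttt{def}\ f(\texttt{self}:D)(\overline{x:T}):T$ per destructor $f$, whose clauses are $\texttt{case}\ C(\overline y)\Rightarrow[\texttt{this}\mapsto\texttt{self}]e'$ for each generator $C(\overline{y:S})$ of $D$ implementing $f$ with translated body $e'$, plus $\texttt{case}\ \_\Rightarrow[\texttt{this}\mapsto\texttt{self}]e'$ for a translated default body $e'$; (Gen2Ctr) generators of $D\in\textsc{It}$ become constructors $\texttt{case}\ C(\overline{x:T})\ \texttt{extends}\ D$; (Dt2It) each $\texttt{data}\ D$ with $D\in\textsc{Dt}$ becomes $\texttt{interface}\ D$ with destructor $\texttt{def}\ f(\overline{x:T}):T$ for each consumer $f$ of $D$ (with default body $[\texttt{self}\mapsto\texttt{this}]e'$ if $f$ has a wildcard clause whose body translates to $e'$); (Ctr2Gen) constructors $C(\overline{x:T})$ of $D\in\textsc{Dt}$ become $\texttt{class}\ C(\overline{x:T})\ \texttt{implements}\ D$ with functions $\texttt{def}\ f(\overline{x:T}):T=[\texttt{self}\mapsto\texttt{this}]e'$ from the clauses $\texttt{case}\ C(\overline y)\Rightarrow e$ of the consumers; (CsmElim) consumers on transformed datatypes are removed; definitions of non-transformed types are kept, with only inner expressions translated. *)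

theory Defs
  imports Main
begin

type_synonym name = string

datatype ty = TName name

datatype exp =
    EVar name
  | EThis
  | ESelf
  | ENew name "exp list"            \<comment> \<open>constructor / generator application C(e...)\<close>
  | ECall exp name "exp list"       \<comment> \<open>consumer / destructor call e.f(e...)\<close>

type_synonym params = "(name \<times> ty) list"

datatype pat = PCtr name "name list" | PWild

datatype dtr =
    DtrDecl name params ty
  | DtrDef name params ty exp       \<comment> \<open>def f(x:T):T = e  (default body)\<close>

datatype fundef = FunDef name params ty exp

datatype def =
    DData name
  | DIface name "dtr list"
  | DCtr name params name                       \<comment> \<open>case C(x:T) extends D\<close>
  | DGen name params name "fundef list"         \<comment> \<open>class C(x:T) implements D {Fun}\<close>
  | DCsm name name params ty "(pat \<times> exp) list" \<comment> \<open>def f(self:D)(x:T):T = case P => e\<close>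

type_synonym prog = "def list \<times> exp"

fun subst_this_self :: "exp \<Rightarrow> exp" where
  "subst_this_self EThis = ESelf"
| "subst_this_self (EVar x) = EVar x"
| "subst_this_self ESelf = ESelf"
| "subst_this_self (ENew c es) = ENew c (map subst_this_self es)"
| "subst_this_self (ECall e f es) = ECall (subst_this_self e) f (map subst_this_self es)"

fun subst_self_this :: "exp \<Rightarrow> exp" where
  "subst_self_this ESelf = EThis"
| "subst_self_this (EVar x) = EVar x"
| "subst_self_this EThis = EThis"
| "subst_self_this (ENew c es) = ENew c (map subst_self_this es)"
| "subst_self_this (ECall e f es) = ECall (subst_self_this e) f (map subst_self_this es)"

record gctx =
  Dt  :: "name set"
  It  :: "name set"
  Ctr :: "name \<Rightarrow> (name \<times> params) set"
  Gen :: "name \<Rightarrow> (name \<times> params) set"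
  Dtr :: "name \<Rightarrow> (name \<times> params \<times> ty) set"
  Csm :: "name \<Rightarrow> (name \<times> params \<times> ty) set"

fun dtr_sig :: "dtr \<Rightarrow> name \<times> params \<times> ty" where
  "dtr_sig (DtrDecl f xs T) = (f, xs, T)"
| "dtr_sig (DtrDef f xs T e) = (f, xs, T)"

text \<open>Global context collected from a list of definitions; S is the set of type
  names selected for transformation. Only selected types are kept; the sets
  associated with unselected types are empty.\<close>

definition collect :: "name set \<Rightarrow> def list \<Rightarrow> gctx" where
  "collect S ds = \<lparr>
     Dt = {D \<in> S. DData D \<in> set ds},
     It = {D \<in> S. \<exists>dts. DIface D dts \<in> set ds},
     Ctr = (\<lambda>D. if D \<in> S then {(C, xs). DCtr C xs D \<in> set ds} else {}),
     Gen = (\<lambda>D. if D \<in> S then {(C, xs). \<exists>fs. DGen C xs D fs \<in> set ds} else {}),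
     Dtr = (\<lambda>D. if D \<in> S then {dtr_sig d | d dts. DIface D dts \<in> set ds \<and> d \<in> set dts} else {}),
     Csm = (\<lambda>D. if D \<in> S then {(f, xs, T). \<exists>cls. DCsm f D xs T cls \<in> set ds} else {}) \<rparr>"

section \<open>Well-formedness (guaranteed by typability of the source program)\<close>

definition wf_defs :: "def list \<Rightarrow> bool" where
  "wf_defs ds \<longleftrightarrow>
     (\<forall>D dts. \<not> (DData D \<in> set ds \<and> DIface D dts \<in> set ds)) \<and>
     (\<forall>C xs D. DCtr C xs D \<in> set ds \<longrightarrow> DData D \<in> set ds) \<and>
     (\<forall>C xs D fs. DGen C xs D fs \<in> set ds \<longrightarrow> (\<exists>dts. DIface D dts \<in> set ds)) \<and>
     (\<forall>f D xs T cls. DCsm f D xs T cls \<in> set ds \<longrightarrow> DData D \<in> set ds)"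

text \<open>The translation of inner expressions (type-directed in the paper) is kept
  abstract as a parameter tr.\<close>

definition consumers_of :: "name \<Rightarrow> def list \<Rightarrow> (name \<times> params \<times> ty \<times> (pat \<times> exp) list) list" where
  "consumers_of D ds = concat (map (\<lambda>d. case d of
       DCsm f D' xs T cls \<Rightarrow> if D' = D then [(f, xs, T, cls)] else []
     | _ \<Rightarrow> []) ds)"

definition generators_of :: "name \<Rightarrow> def list \<Rightarrow> (name \<times> params \<times> fundef list) list" where
  "generators_of D ds = concat (map (\<lambda>d. case d of
       DGen C xs D' fs \<Rightarrow> if D' = D then [(C, xs, fs)] else []
     | _ \<Rightarrow> []) ds)"

definition csm_to_dtr :: "(exp \<Rightarrow> exp) \<Rightarrow> name \<times> params \<times> ty \<times> (pat \<times> exp) list \<Rightarrow> dtr" where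
  "csm_to_dtr tr c = (case c of (f, xs, T, cls) \<Rightarrow>
     (case map snd (filter (\<lambda>pe. fst pe = PWild) cls) of
        [] \<Rightarrow> DtrDecl f xs T
      | e # _ \<Rightarrow> DtrDef f xs T (subst_self_this (tr e))))"

definition dtr_to_csm :: "(exp \<Rightarrow> exp) \<Rightarrow> def list \<Rightarrow> name \<Rightarrow> dtr \<Rightarrow> def" where
  "dtr_to_csm tr ds D d = (case dtr_sig d of (f, xs, T) \<Rightarrow>
     DCsm f D xs T
       (concat (map (\<lambda>(C, ys, fs). concat (map (\<lambda>fd. case fd of FunDef g zs U e \<Rightarrow>
                 if g = f then [(PCtr C (map fst ys), subst_this_self (tr e))] else []) fs))
          (generators_of D ds))
        @ (case d of DtrDecl _ _ _ \<Rightarrow> [] | DtrDef _ _ _ e \<Rightarrow> [(PWild, subst_this_self (tr e))])))"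

definition ctr_funs :: "(exp \<Rightarrow> exp) \<Rightarrow> def list \<Rightarrow> name \<Rightarrow> name \<Rightarrow> fundef list" where
  "ctr_funs tr ds D C = concat (map (\<lambda>(f, xs, T, cls). concat (map (\<lambda>(p, e). case p of
        PCtr C' ys \<Rightarrow> if C' = C then [FunDef f xs T (subst_self_this (tr e))] else []
      | PWild \<Rightarrow> []) cls)) (consumers_of D ds))"

fun tr_dtr :: "(exp \<Rightarrow> exp) \<Rightarrow> dtr \<Rightarrow> dtr" where
  "tr_dtr tr (DtrDecl f xs T) = DtrDecl f xs T"
| "tr_dtr tr (DtrDef f xs T e) = DtrDef f xs T (tr e)"

fun tr_fun :: "(exp \<Rightarrow> exp) \<Rightarrow> fundef \<Rightarrow> fundef" where
  "tr_fun tr (FunDef f xs T e) = FunDef f xs T (tr e)"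

definition trans_def :: "name set \<Rightarrow> (exp \<Rightarrow> exp) \<Rightarrow> def list \<Rightarrow> def \<Rightarrow> def list" where
  "trans_def S tr ds d = (let \<Delta> = collect S ds in case d of
     DData D \<Rightarrow> if D \<in> Dt \<Delta>
                 then [DIface D (map (csm_to_dtr tr) (consumers_of D ds))]      \<comment> \<open>Dt2It\<close>
                 else [DData D]
   | DIface D dts \<Rightarrow> if D \<in> It \<Delta>
                 then DData D # map (dtr_to_csm tr ds D) dts                    \<comment> \<open>It2Dt\<close>
                 else [DIface D (map (tr_dtr tr) dts)]
   | DCtr C xs D \<Rightarrow> if D \<in> Dt \<Delta>
                 then [DGen C xs D (ctr_funs tr ds D C)]                        \<comment> \<open>Ctr2Gen\<close>
                 else [DCtr C xs D]
   | DGen C xs D fs \<Rightarrow> if D \<in> It \<Delta>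
                 then [DCtr C xs D]                                             \<comment> \<open>Gen2Ctr\<close>
                 else [DGen C xs D (map (tr_fun tr) fs)]
   | DCsm f D xs T cls \<Rightarrow> if D \<in> Dt \<Delta>
                 then []                                                        \<comment> \<open>CsmElim\<close>
                 else [DCsm f D xs T (map (\<lambda>(p, e). (p, tr e)) cls)])"

definition translate :: "name set \<Rightarrow> (exp \<Rightarrow> exp) \<Rightarrow> prog \<Rightarrow> prog" where
  "translate S tr P = (concat (map (trans_def S tr (fst P)) (fst P)), tr (snd P))"

end

theory Submission
  imports Defs
begin

text \<open>Each rule of the translation turns a definition of one form into definitions of the
  dual form for the same type name, so every component of the context collected from
  the translated program can be read off by inverting the translation form by form.
  The only spurious sources are untransformed definitions attached to a transformed
  type (e.g. a constructor of a transformed interface); well-formedness of the source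
  program rules them out, because data and interface names are disjoint, constructors
  and consumers only extend data types, and generators only implement interfaces.\<close>

definition translate_defs :: "name set \<Rightarrow> (exp \<Rightarrow> exp) \<Rightarrow> def list \<Rightarrow> def list" where
  "translate_defs S tr ds = concat (map (trans_def S tr ds) ds)"

lemma fst_translate: "fst (translate S tr P) = translate_defs S tr (fst P)"
  by (simp add: translate_def translate_defs_def)

lemma set_translate_defs: "set (translate_defs S tr ds) = (\<Union>d\<in>set ds. set (trans_def S tr ds d))"
  by (simp add: translate_defs_def)

lemma set_consumers_of:
  "set (consumers_of D ds) = {(f, xs, T, cls). DCsm f D xs T cls \<in> set ds}"
  by (induction ds) (auto simp: consumers_of_def split: def.splits)

lemma dtr_sig_csm_to_dtr: "dtr_sig (csm_to_dtr tr (f, xs, T, cls)) = (f, xs, T)"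
  by (auto simp: csm_to_dtr_def split: list.splits)

lemma ex_dtr_to_csm_eq_DCsm_iff:
  "(\<exists>cls. dtr_to_csm tr ds D d = DCsm f D' xs T cls) \<longleftrightarrow> D' = D \<and> dtr_sig d = (f, xs, T)"
  by (cases d) (auto simp: dtr_to_csm_def)

lemma DData_in_trans_def_iff:
  "DData D \<in> set (trans_def S tr ds d) \<longleftrightarrow>
     d = DData D \<and> D \<notin> Dt (collect S ds) \<or> (\<exists>dts. d = DIface D dts \<and> D \<in> It (collect S ds))"
  by (cases d) (auto simp: trans_def_def Let_def dtr_to_csm_def split: prod.splits)

lemma DIface_in_trans_def_iff:
  "DIface D dts' \<in> set (trans_def S tr ds d) \<longleftrightarrow>
     d = DData D \<and> D \<in> Dt (collect S ds) \<and> dts' = map (csm_to_dtr tr) (consumers_of D ds) \<or>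
     (\<exists>dts. d = DIface D dts \<and> D \<notin> It (collect S ds) \<and> dts' = map (tr_dtr tr) dts)"
  by (cases d) (auto simp: trans_def_def Let_def dtr_to_csm_def split: prod.splits)

lemma DCtr_in_trans_def_iff:
  "DCtr C xs D \<in> set (trans_def S tr ds d) \<longleftrightarrow>
     d = DCtr C xs D \<and> D \<notin> Dt (collect S ds) \<or> (\<exists>fs. d = DGen C xs D fs \<and> D \<in> It (collect S ds))"
  by (cases d) (auto simp: trans_def_def Let_def dtr_to_csm_def split: prod.splits)

lemma DGen_in_trans_def_iff:
  "DGen C xs D fs' \<in> set (trans_def S tr ds d) \<longleftrightarrow>
     d = DCtr C xs D \<and> D \<in> Dt (collect S ds) \<and> fs' = ctr_funs tr ds D C \<or>
     (\<exists>fs. d = DGen C xs D fs \<and> D \<notin> It (collect S ds) \<and> fs' = map (tr_fun tr) fs)"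
  by (cases d) (auto simp: trans_def_def Let_def dtr_to_csm_def split: prod.splits)

lemma ex_DCsm_in_trans_def_iff:
  "(\<exists>cls'. DCsm f D xs T cls' \<in> set (trans_def S tr ds d)) \<longleftrightarrow>
     (\<exists>dts. d = DIface D dts \<and> D \<in> It (collect S ds) \<and> (f, xs, T) \<in> dtr_sig ` set dts) \<or>
     (\<exists>cls. d = DCsm f D xs T cls \<and> D \<notin> Dt (collect S ds))"
proof (cases d)
  case (DIface D' dts)
  have "(\<exists>cls'. DCsm f D xs T cls' \<in> dtr_to_csm tr ds D' ` set dts) \<longleftrightarrow>
      (\<exists>d\<in>set dts. \<exists>cls'. dtr_to_csm tr ds D' d = DCsm f D xs T cls')"
    by (metis imageE image_eqI)
  also have "\<dots> \<longleftrightarrow> D' = D \<and> (f, xs, T) \<in> dtr_sig ` set dts"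
    by (force simp: ex_dtr_to_csm_eq_DCsm_iff)
  finally show ?thesis
    using DIface by (auto simp: trans_def_def Let_def)
qed (auto simp: trans_def_def Let_def)

lemma Dt_collect_translate_defs: "Dt (collect S (translate_defs S tr ds)) = It (collect S ds)"
  by (auto simp: collect_def set_translate_defs DData_in_trans_def_iff)

lemma It_collect_translate_defs: "It (collect S (translate_defs S tr ds)) = Dt (collect S ds)"
  by (auto simp: collect_def set_translate_defs DIface_in_trans_def_iff)

lemma Csm_collect_translate_defs:
  assumes "wf_defs ds" and "D \<in> It (collect S ds)"
  shows "Csm (collect S (translate_defs S tr ds)) D = Dtr (collect S ds) D"
proof -
  have no_consumers: "DCsm f D xs T cls \<notin> set ds" for f xs T cls
    using assms by (simp add: wf_defs_def collect_def) blast
  have "(f, xs, T) \<in> Csm (collect S (translate_defs S tr ds)) D \<longleftrightarrow>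
      (f, xs, T) \<in> Dtr (collect S ds) D" for f xs T
  proof -
    have "(f, xs, T) \<in> Csm (collect S (translate_defs S tr ds)) D \<longleftrightarrow>
        (\<exists>d\<in>set ds. \<exists>cls. DCsm f D xs T cls \<in> set (trans_def S tr ds d))"
      using assms(2) by (auto simp: collect_def set_translate_defs)
    also have "\<dots> \<longleftrightarrow> (\<exists>dts. DIface D dts \<in> set ds \<and> (f, xs, T) \<in> dtr_sig ` set dts)"
      using assms(2) no_consumers by (auto simp: ex_DCsm_in_trans_def_iff)
    also have "\<dots> \<longleftrightarrow> (f, xs, T) \<in> Dtr (collect S ds) D"
      using assms(2) by (auto simp: collect_def)
    finally show ?thesis .
  qed
  then show ?thesis
    by auto
qed

lemma Ctr_collect_translate_defs:
  assumes "wf_defs ds" and "D \<in> It (collect S ds)"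
  shows "Ctr (collect S (translate_defs S tr ds)) D = Gen (collect S ds) D"
proof -
  have no_constructors: "DCtr C xs D \<notin> set ds" for C xs
    using assms by (simp add: wf_defs_def collect_def) blast
  show ?thesis
    using assms(2) no_constructors
    by (auto simp: collect_def set_translate_defs DCtr_in_trans_def_iff)
qed

lemma Dtr_collect_translate_defs:
  assumes "wf_defs ds" and "D \<in> Dt (collect S ds)"
  shows "Dtr (collect S (translate_defs S tr ds)) D = Csm (collect S ds) D"
proof -
  have D: "D \<in> S" "DData D \<in> set ds"
    using assms(2) by (auto simp: collect_def)
  then have no_interface: "DIface D dts \<notin> set ds" for dts
    using assms(1) by (auto simp: wf_defs_def)
  have "DIface D dts \<in> set (translate_defs S tr ds) \<longleftrightarrow>
      dts = map (csm_to_dtr tr) (consumers_of D ds)" for dts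
    using assms(2) D no_interface by (auto simp: set_translate_defs DIface_in_trans_def_iff)
  then have "Dtr (collect S (translate_defs S tr ds)) D =
      dtr_sig ` csm_to_dtr tr ` set (consumers_of D ds)"
    using D(1) by (auto simp: collect_def)
  also have "\<dots> = Csm (collect S ds) D"
    using D(1) by (force simp: collect_def set_consumers_of dtr_sig_csm_to_dtr image_iff)
  finally show ?thesis .
qed

lemma Gen_collect_translate_defs:
  assumes "wf_defs ds" and "D \<in> Dt (collect S ds)"
  shows "Gen (collect S (translate_defs S tr ds)) D = Ctr (collect S ds) D"
proof -
  have no_generators: "DGen C xs D fs \<notin> set ds" for C xs fs
    using assms by (simp add: wf_defs_def collect_def) blast
  show ?thesis
    using assms(2) no_generators
    by (auto simp: collect_def set_translate_defs DGen_in_trans_def_iff)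
qed

theorem lemmaB5:
  fixes S :: "name set" and tr :: "exp \<Rightarrow> exp" and P P' :: prog
  assumes wf: "wf_defs (fst P)"
    and trans: "P' = translate S tr P"
  defines "\<Delta> \<equiv> collect S (fst P)" and "\<Delta>' \<equiv> collect S (fst P')"
  shows "It \<Delta> = Dt \<Delta>' \<and> Dt \<Delta> = It \<Delta>'
       \<and> (\<forall>D \<in> It \<Delta>. Dtr \<Delta> D = Csm \<Delta>' D \<and> Gen \<Delta> D = Ctr \<Delta>' D)
       \<and> (\<forall>D \<in> Dt \<Delta>. Csm \<Delta> D = Dtr \<Delta>' D \<and> Ctr \<Delta> D = Gen \<Delta>' D)"
proof -
  have "\<Delta>' = collect S (translate_defs S tr (fst P))"
    unfolding \<Delta>'_def trans fst_translate ..
  then show ?thesis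
    unfolding \<Delta>_def
    using wf Dt_collect_translate_defs It_collect_translate_defs
      Csm_collect_translate_defs Ctr_collect_translate_defs
      Dtr_collect_translate_defs Gen_collect_translate_defs
    by simp
qed

end
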